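(* Let $\alpha\in(0,1)\setminus\mathbb{Q}$. For every integer $n\geq1$, $$\min_{1\leq k\leq n}\operatorname{dist}(k\alpha,\mathbb{Z})\geq\left(2e^nE_n(\alpha)\right)^{-1}.$$
   Context: Let $\Delta^2$ be the closed unit bidisk in $\mathbb{C}^2$, $\mathcal{P}_n$ the space of polynomials $P\in\mathbb{C}[z,w]$ of total degree at most $n$, $K=\{(e^z,e^{\alpha z}):\ |z|\leq1\}$, $\|P\|_A=\sup_A|P|$, and $E_n(\alpha)=\sup\{\|P\|_{\Delta^2}:\ P\in\mathcal{P}_n,\ \|P\|_K\leq1\}$. *)

theory Defs
  imports "HOL-Analysis.Analysis"
begin

text \<open>A polynomial in C[z,w] of total degree at most n is given by its coefficient
  function c (only coefficients c i j with i + j \<le> n are used).\<close>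
definition poly2 :: "nat \<Rightarrow> (nat \<Rightarrow> nat \<Rightarrow> complex) \<Rightarrow> complex \<Rightarrow> complex \<Rightarrow> complex" where
  "poly2 n c z w = (\<Sum>(i,j)\<in>{(i,j). i + j \<le> n}. c i j * z ^ i * w ^ j)"

definition norm_bidisk :: "nat \<Rightarrow> (nat \<Rightarrow> nat \<Rightarrow> complex) \<Rightarrow> real" where
  "norm_bidisk n c = (SUP zw\<in>{(z,w). cmod z \<le> 1 \<and> cmod w \<le> 1}. cmod (poly2 n c (fst zw) (snd zw)))"

text \<open>Sup-norm on K = {(e^z, e^(alpha z)) : |z| \<le> 1}.\<close>
definition norm_K :: "real \<Rightarrow> nat \<Rightarrow> (nat \<Rightarrow> nat \<Rightarrow> complex) \<Rightarrow> real" where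
  "norm_K \<alpha> n c = (SUP z\<in>{z. cmod z \<le> 1}. cmod (poly2 n c (exp z) (exp (complex_of_real \<alpha> * z))))"

definition E :: "nat \<Rightarrow> real \<Rightarrow> real" where
  "E n \<alpha> = Sup {norm_bidisk n c | c. norm_K \<alpha> n c \<le> 1}"

definition distZ :: "real \<Rightarrow> real" where
  "distZ x = Inf {\<bar>x - of_int m\<bar> | m. True}"

end

theory Submission imports Defs "HOL-Computational_Algebra.Polynomial" begin

(* Fix 1 <= k <= n, let m be the integer nearest to k alpha and d = k alpha - m, delta = |d|;
   delta > 0 because alpha is irrational, and m <= k, delta <= 1/2.  The binomial
   P(z,w) = w^k - z^m has total degree <= n.  On K,
     |P(e^z, e^(alpha z))| = |e^(m z)| |e^(d z) - 1| <= e^(m + delta) delta <= e^(n+1) delta,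
   while at the point (1, w0) of the bidisk with w0^k = -1 we have |P| = 2.  Rescaling P by
   its bound on K gives E_n(alpha) >= 2 / (e^(n+1) delta), hence
   (2 e^n E_n(alpha))^(-1) <= e delta / 4 <= delta <= dist(k alpha, Z).

   To use E_n(alpha) as a genuine supremum its defining set must be bounded above.  This
   holds because the nodes e^((i + j alpha)/D), (i + j <= n), are pairwise distinct for
   irrational alpha, so Lagrange interpolation bounds every coefficient of P by a constant
   times the sup of P on K. *)

definition monomials :: "nat \<Rightarrow> (nat \<times> nat) set" where
  "monomials n = {(i,j). i + j \<le> n}"

lemma finite_monomials: "finite (monomials n)"
  by (rule finite_subset[of _ "{0..n} \<times> {0..n}"]) (auto simp: monomials_def)

lemma poly2_monomials: "poly2 n c z w = (\<Sum>p\<in>monomials n. c (fst p) (snd p) * z ^ fst p * w ^ snd p)"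
  unfolding poly2_def monomials_def by (simp add: case_prod_unfold)

lemma poly2_scale: "poly2 n (\<lambda>i j. u * c i j) z w = u * poly2 n c z w"
  unfolding poly2_monomials by (simp add: sum_distrib_left mult.assoc)

text \<open>On the polydisk of radius \<open>R \<ge> 1\<close> a polynomial is bounded by the l1-norm of its
  coefficients times \<open>R ^ n\<close>; this makes all suprema below finite.\<close>
lemma poly2_bound:
  assumes "cmod z \<le> R" "cmod w \<le> R" "1 \<le> R"
  shows "cmod (poly2 n c z w) \<le> (\<Sum>p\<in>monomials n. cmod (c (fst p) (snd p))) * R ^ n"
proof -
  have "cmod (poly2 n c z w) \<le> (\<Sum>p\<in>monomials n. cmod (c (fst p) (snd p) * z ^ fst p * w ^ snd p))"
    unfolding poly2_monomials by (rule norm_sum)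
  also have "\<dots> \<le> (\<Sum>p\<in>monomials n. cmod (c (fst p) (snd p)) * R ^ n)"
  proof (rule sum_mono)
    fix p assume p: "p \<in> monomials n"
    have "cmod z ^ fst p * cmod w ^ snd p \<le> R ^ fst p * R ^ snd p"
      by (intro mult_mono power_mono) (use assms in auto)
    also have "\<dots> \<le> R ^ n"
      using p assms by (auto simp: monomials_def simp flip: power_add intro!: power_increasing)
    finally show "cmod (c (fst p) (snd p) * z ^ fst p * w ^ snd p) \<le> cmod (c (fst p) (snd p)) * R ^ n"
      by (simp add: norm_mult norm_power mult.assoc mult_left_mono)
  qed
  also have "\<dots> = (\<Sum>p\<in>monomials n. cmod (c (fst p) (snd p))) * R ^ n"
    by (simp add: sum_distrib_right)
  finally show ?thesis .
qed

text \<open>Points of \<open>K\<close> lie in the polydisk of radius \<open>e\<close>:\<close>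
lemma norm_exp_bounded:
  fixes u :: complex
  assumes "cmod u \<le> r"
  shows "cmod (exp u) \<le> exp r"
  using norm_exp[of u] assms by (meson exp_le_cancel_iff order_trans)

lemma norm_K_ge:
  assumes "\<bar>\<alpha>\<bar> \<le> 1" "cmod z \<le> 1"
  shows "cmod (poly2 n c (exp z) (exp (complex_of_real \<alpha> * z))) \<le> norm_K \<alpha> n c"
  unfolding norm_K_def
proof (rule cSUP_upper)
  show "z \<in> {z. cmod z \<le> 1}" using assms by simp
  show "bdd_above ((\<lambda>z. cmod (poly2 n c (exp z) (exp (complex_of_real \<alpha> * z)))) ` {z. cmod z \<le> 1})"
  proof (rule bdd_aboveI2)
    fix u :: complex assume u: "u \<in> {z. cmod z \<le> 1}"
    have "cmod (complex_of_real \<alpha> * u) \<le> 1"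
      using u assms by (simp add: norm_mult) (metis mult_le_one norm_ge_zero)
    then show "cmod (poly2 n c (exp u) (exp (complex_of_real \<alpha> * u)))
        \<le> (\<Sum>p\<in>monomials n. cmod (c (fst p) (snd p))) * exp 1 ^ n"
      using u by (intro poly2_bound norm_exp_bounded) auto
  qed
qed

lemma norm_K_le:
  assumes "\<And>z. cmod z \<le> 1 \<Longrightarrow> cmod (poly2 n c (exp z) (exp (complex_of_real \<alpha> * z))) \<le> M"
  shows "norm_K \<alpha> n c \<le> M"
  unfolding norm_K_def by (rule cSUP_least) (use assms in \<open>auto intro!: exI[of _ 0]\<close>)

lemma norm_bidisk_le: "norm_bidisk n c \<le> (\<Sum>p\<in>monomials n. cmod (c (fst p) (snd p)))"
  unfolding norm_bidisk_def
proof (rule cSUP_least)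
  show "{(z, w). cmod z \<le> 1 \<and> cmod w \<le> 1} \<noteq> {}" by (auto intro!: exI[of _ "0::complex"])
  fix zw assume "zw \<in> {(z::complex, w::complex). cmod z \<le> 1 \<and> cmod w \<le> 1}"
  then show "cmod (poly2 n c (fst zw) (snd zw)) \<le> (\<Sum>p\<in>monomials n. cmod (c (fst p) (snd p)))"
    using poly2_bound[of "fst zw" 1 "snd zw" n c] by auto
qed

lemma norm_bidisk_ge:
  assumes "cmod z \<le> 1" "cmod w \<le> 1"
  shows "cmod (poly2 n c z w) \<le> norm_bidisk n c"
proof -
  have "cmod (poly2 n c (fst (z,w)) (snd (z,w))) \<le> norm_bidisk n c"
    unfolding norm_bidisk_def
  proof (rule cSUP_upper)
    show "(z,w) \<in> {(z, w). cmod z \<le> 1 \<and> cmod w \<le> 1}" using assms by simp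
    show "bdd_above ((\<lambda>zw. cmod (poly2 n c (fst zw) (snd zw))) ` {(z, w). cmod z \<le> 1 \<and> cmod w \<le> 1})"
      by (rule bdd_aboveI2[where M="\<Sum>p\<in>monomials n. cmod (c (fst p) (snd p))"])
         (use poly2_bound[of _ 1 _ n c] in auto)
  qed
  then show ?thesis by simp
qed

section \<open>Boundedness of the extremal problem\<close>

lemma lagrange_basis:
  fixes x :: "'a \<Rightarrow> 'b::field"
  assumes "finite S" "inj_on x S" "p \<in> S"
  shows "\<exists>L. degree L < card S \<and> (\<forall>q\<in>S. poly L (x q) = (if q = p then 1 else 0))"
proof -
  define L where "L = smult (inverse (\<Prod>q\<in>S-{p}. x p - x q)) (\<Prod>q\<in>S-{p}. [:- x q, 1:])"
  have "degree L \<le> card (S - {p})"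
    using degree_prod_sum_le[of "S-{p}" "\<lambda>q. [:- x q, 1:]"] assms(1)
    unfolding L_def by (simp add: o_def)
  also have "\<dots> < card S" using assms by (intro card_Diff1_less)
  finally have "degree L < card S" .
  moreover have "poly L (x q) = (if q = p then 1 else 0)" if q: "q \<in> S" for q
  proof -
    have "(\<Prod>r\<in>S-{p}. x p - x r) \<noteq> 0"
      using assms by (auto dest: inj_onD)
    moreover have "(\<Prod>r\<in>S-{p}. x q - x r) = 0" if "q \<noteq> p"
      using assms q that by auto
    ultimately show ?thesis by (auto simp: L_def poly_prod)
  qed
  ultimately show ?thesis by blast
qed

lemma vandermonde_weight_bound:
  fixes x :: "'a \<Rightarrow> 'b::real_normed_field"
  assumes "finite S" "inj_on x S"
  shows "\<exists>B. \<forall>a p. p \<in> S \<longrightarrow> (\<forall>r<card S. norm (\<Sum>q\<in>S. a q * x q ^ r) \<le> 1) \<longrightarrow> norm (a p) \<le> B p"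
proof -
  define D where "D = card S"
  obtain L where L: "\<And>p. p \<in> S \<Longrightarrow> degree (L p) < D \<and> (\<forall>q\<in>S. poly (L p) (x q) = (if q = p then 1 else 0))"
    using lagrange_basis[OF assms] unfolding D_def by metis
  have poly_L: "poly (L p) y = (\<Sum>r<D. coeff (L p) r * y ^ r)" if "p \<in> S" for p y
    unfolding poly_altdef using L[OF that]
    by (intro sum.mono_neutral_left) (auto simp: coeff_eq_0)
  show ?thesis
  proof (intro exI[of _ "\<lambda>p. \<Sum>r<D. norm (coeff (L p) r)"] allI impI)
    fix a p assume p: "p \<in> S" and sums: "\<forall>r<card S. norm (\<Sum>q\<in>S. a q * x q ^ r) \<le> 1"
    have "(\<Sum>q\<in>S. a q * poly (L p) (x q)) = (\<Sum>q\<in>S. if q = p then a q else 0)"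
      using L[OF p] by (intro sum.cong) auto
    then have "a p = (\<Sum>q\<in>S. a q * poly (L p) (x q))"
      using assms(1) p by simp
    also have "\<dots> = (\<Sum>q\<in>S. \<Sum>r<D. coeff (L p) r * (a q * x q ^ r))"
      using p by (simp add: poly_L sum_distrib_left mult.left_commute)
    also have "\<dots> = (\<Sum>r<D. \<Sum>q\<in>S. coeff (L p) r * (a q * x q ^ r))"
      by (rule sum.swap)
    also have "\<dots> = (\<Sum>r<D. coeff (L p) r * (\<Sum>q\<in>S. a q * x q ^ r))"
      by (simp add: sum_distrib_left)
    finally have "norm (a p) \<le> (\<Sum>r<D. norm (coeff (L p) r * (\<Sum>q\<in>S. a q * x q ^ r)))"
      by (metis norm_sum)
    also have "\<dots> \<le> (\<Sum>r<D. norm (coeff (L p) r))"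
      using sums by (intro sum_mono) (auto simp: D_def norm_mult intro: mult_left_le)
    finally show "norm (a p) \<le> (\<Sum>r<D. norm (coeff (L p) r))" .
  qed
qed

lemma exp_nodes_inj:
  assumes "\<alpha> \<notin> \<rat>" "D > 0"
  shows "inj_on (\<lambda>p. exp (complex_of_real ((real (fst p) + real (snd p) * \<alpha>) / real D))) A"
proof (rule inj_onI)
  fix p q :: "nat \<times> nat"
  assume "exp (complex_of_real ((real (fst p) + real (snd p) * \<alpha>) / real D))
        = exp (complex_of_real ((real (fst q) + real (snd q) * \<alpha>) / real D))"
  then have eq: "real (fst p) + real (snd p) * \<alpha> = real (fst q) + real (snd q) * \<alpha>"
    using assms(2) by (simp only: exp_of_real of_real_eq_iff exp_inj_iff) simp
  show "p = q"
  proof (cases "snd p = snd q")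
    case True
    then show ?thesis using eq by (simp add: prod_eq_iff)
  next
    case False
    from eq have "\<alpha> = (real (fst q) - real (fst p)) / (real (snd p) - real (snd q))"
      using False by (simp add: field_simps)
    also have "\<dots> \<in> \<rat>" by simp
    finally show ?thesis using assms(1) by simp
  qed
qed

lemma exp_monomial_sample:
  "exp (complex_of_real (real r / real D)) ^ i * exp (complex_of_real \<alpha> * complex_of_real (real r / real D)) ^ j
     = exp (complex_of_real ((real i + real j * \<alpha>) / real D)) ^ r"
proof -
  have "of_nat i * complex_of_real (real r / real D) + of_nat j * (complex_of_real \<alpha> * complex_of_real (real r / real D))
      = of_nat r * complex_of_real ((real i + real j * \<alpha>) / real D)"
    by (simp add: algebra_simps add_divide_distrib)
  then show ?thesis by (simp only: exp_of_nat_mult[symmetric] exp_add[symmetric])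
qed

text \<open>Coefficients of polynomials with sup-norm at most 1 on \<open>K\<close> are uniformly bounded:
  sample on \<open>K\<close> at \<open>z = r/D\<close>, \<open>r < D = card (monomials n)\<close>, and invert the Vandermonde
  system in the distinct nodes \<open>exp ((i + j\<alpha>)/D)\<close>.\<close>
lemma norm_K_coeff_bound:
  assumes "\<alpha> \<notin> \<rat>" "\<bar>\<alpha>\<bar> \<le> 1"
  shows "\<exists>B. \<forall>c p. norm_K \<alpha> n c \<le> 1 \<longrightarrow> p \<in> monomials n \<longrightarrow> cmod (c (fst p) (snd p)) \<le> B p"
proof -
  define D where "D = card (monomials n)"
  have "(0,0) \<in> monomials n" by (simp add: monomials_def)
  then have D_pos: "D > 0" using finite_monomials by (auto simp: D_def card_gt_0_iff)
  define x where "x = (\<lambda>p::nat \<times> nat. exp (complex_of_real ((real (fst p) + real (snd p) * \<alpha>) / real D)))"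
  have "inj_on x (monomials n)" unfolding x_def by (rule exp_nodes_inj[OF assms(1) D_pos])
  from vandermonde_weight_bound[OF finite_monomials this, folded D_def]
  obtain B where B: "\<And>a p. p \<in> monomials n \<Longrightarrow>
      (\<forall>r<D. cmod (\<Sum>q\<in>monomials n. a q * x q ^ r) \<le> 1) \<Longrightarrow> cmod (a p) \<le> B p"
    by blast
  have sample: "poly2 n c (exp (complex_of_real (real r / real D)))
        (exp (complex_of_real \<alpha> * complex_of_real (real r / real D)))
      = (\<Sum>q\<in>monomials n. c (fst q) (snd q) * x q ^ r)" for c r
    unfolding poly2_monomials x_def
    by (intro sum.cong refl) (simp only: mult.assoc exp_monomial_sample)
  show ?thesis
  proof (intro exI[of _ B] allI impI)
    fix c p assume c: "norm_K \<alpha> n c \<le> 1" and p: "p \<in> monomials n"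
    have "cmod (\<Sum>q\<in>monomials n. c (fst q) (snd q) * x q ^ r) \<le> 1" if "r < D" for r
    proof -
      have "real r / real D \<le> 1" using that by simp
      then have "cmod (complex_of_real (real r / real D)) \<le> 1" by (simp only: norm_of_real) simp
      then show ?thesis unfolding sample[symmetric] using norm_K_ge[OF assms(2)] c by (meson order_trans)
    qed
    then show "cmod (c (fst p) (snd p)) \<le> B p" using B[OF p, of "\<lambda>q. c (fst q) (snd q)"] by blast
  qed
qed

lemma E_set_bdd:
  assumes "\<alpha> \<notin> \<rat>" "\<bar>\<alpha>\<bar> \<le> 1"
  shows "bdd_above {norm_bidisk n c | c. norm_K \<alpha> n c \<le> 1}"
proof -
  obtain B where B: "\<And>c p. norm_K \<alpha> n c \<le> 1 \<Longrightarrow> p \<in> monomials n \<Longrightarrow> cmod (c (fst p) (snd p)) \<le> B p"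
    using norm_K_coeff_bound[OF assms, of n] by blast
  show ?thesis
  proof (rule bdd_aboveI)
    fix y assume "y \<in> {norm_bidisk n c | c. norm_K \<alpha> n c \<le> 1}"
    then obtain c where y: "y = norm_bidisk n c" and c: "norm_K \<alpha> n c \<le> 1" by blast
    have "y \<le> (\<Sum>p\<in>monomials n. cmod (c (fst p) (snd p)))" unfolding y by (rule norm_bidisk_le)
    also have "\<dots> \<le> (\<Sum>p\<in>monomials n. B p)" by (intro sum_mono B c)
    finally show "y \<le> (\<Sum>p\<in>monomials n. B p)" .
  qed
qed

section \<open>Lower bounds for \<open>E n \<alpha>\<close> from test polynomials\<close>

text \<open>If \<open>|P| \<le> M\<close> on \<open>K\<close>, then \<open>P/M\<close> is admissible, so \<open>E n \<alpha> \<ge> |P(z0,w0)|/M\<close> for every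
  point of the bidisk.\<close>
lemma E_ge_quotient:
  assumes "\<alpha> \<notin> \<rat>" "\<bar>\<alpha>\<bar> \<le> 1" "M > 0"
    and on_K: "\<And>z. cmod z \<le> 1 \<Longrightarrow> cmod (poly2 n c (exp z) (exp (complex_of_real \<alpha> * z))) \<le> M"
    and "cmod z0 \<le> 1" "cmod w0 \<le> 1"
  shows "cmod (poly2 n c z0 w0) / M \<le> E n \<alpha>"
proof -
  define c' where "c' i j = complex_of_real (1 / M) * c i j" for i j
  have poly2_c': "poly2 n c' z w = complex_of_real (1 / M) * poly2 n c z w" for z w
    unfolding c'_def by (rule poly2_scale)
  have "norm_K \<alpha> n c' \<le> 1"
    by (rule norm_K_le) (use on_K \<open>M > 0\<close> in \<open>auto simp: poly2_c' norm_mult norm_divide divide_le_eq\<close>)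
  have "cmod (poly2 n c z0 w0) / M = cmod (poly2 n c' z0 w0)"
    using \<open>M > 0\<close> by (simp add: poly2_c' norm_mult norm_divide)
  also have "\<dots> \<le> norm_bidisk n c'" using assms by (intro norm_bidisk_ge)
  also have "\<dots> \<le> E n \<alpha>" unfolding E_def
    by (rule cSup_upper) (use \<open>norm_K \<alpha> n c' \<le> 1\<close> E_set_bdd[OF assms(1,2), of n] in auto)
  finally show ?thesis .
qed

lemma poly2_diff: "poly2 n (\<lambda>i j. f i j - g i j) z w = poly2 n f z w - poly2 n g z w"
  unfolding poly2_monomials by (simp add: algebra_simps sum_subtractf)

lemma poly2_single_monomial:
  assumes "a + b \<le> n"
  shows "poly2 n (\<lambda>i j. if (i,j) = (a,b) then 1 else 0) z w = z ^ a * w ^ b"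
proof -
  have "poly2 n (\<lambda>i j. if (i,j) = (a,b) then 1 else 0) z w
      = (\<Sum>p\<in>monomials n. if p = (a,b) then z ^ a * w ^ b else 0)"
    unfolding poly2_monomials by (intro sum.cong) auto
  also have "\<dots> = z ^ a * w ^ b"
    using assms finite_monomials[of n] by (simp add: monomials_def)
  finally show ?thesis .
qed

definition binomial_coeffs :: "nat \<Rightarrow> nat \<Rightarrow> nat \<Rightarrow> nat \<Rightarrow> complex" where
  "binomial_coeffs k m i j = (if (i,j) = (0,k) then 1 else 0) - (if (i,j) = (m,0) then 1 else 0)"

lemma poly2_binomial:
  assumes "k \<le> n" "m \<le> n"
  shows "poly2 n (binomial_coeffs k m) z w = w ^ k - z ^ m"
  using poly2_single_monomial[of 0 k n z w] poly2_single_monomial[of m 0 n z w] assms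
  unfolding binomial_coeffs_def poly2_diff by simp

lemma norm_exp_minus_one_le: "cmod (exp u - 1) \<le> exp (cmod u) * cmod u"
proof -
  have "norm (exp u - exp 0) \<le> exp (cmod u) * norm (u - 0)"
  proof (rule field_differentiable_bound[where S="cball 0 (cmod u)" and f'=exp])
    fix z :: complex assume "z \<in> cball 0 (cmod u)"
    then show "cmod (exp z) \<le> exp (cmod u)" by (intro norm_exp_bounded) simp
  qed (auto intro!: derivative_eq_intros)
  then show ?thesis by simp
qed

text \<open>If \<open>k\<alpha> = m + d\<close>, the binomial is small on \<open>K\<close>:
  \<open>e^(\<alpha> z k) - e^(z m) = e^(m z) (e^(d z) - 1)\<close>.\<close>
lemma binomial_on_K:
  assumes "real k * \<alpha> = real m + d" "cmod z \<le> 1"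
  shows "cmod (exp (complex_of_real \<alpha> * z) ^ k - exp z ^ m) \<le> exp (real m + \<bar>d\<bar>) * \<bar>d\<bar>"
proof -
  have "of_nat k * (complex_of_real \<alpha> * z) = of_nat m * z + complex_of_real d * z"
    using arg_cong[OF assms(1), of "\<lambda>t. complex_of_real t * z"] by (simp add: algebra_simps)
  then have factor: "exp (complex_of_real \<alpha> * z) ^ k - exp z ^ m
      = exp (of_nat m * z) * (exp (complex_of_real d * z) - 1)"
    by (simp add: exp_add right_diff_distrib flip: exp_of_nat_mult)
  have "cmod (exp (of_nat m * z)) \<le> exp (real m)"
    using assms(2) by (intro norm_exp_bounded) (simp add: norm_mult mult_left_le)
  moreover have "cmod (complex_of_real d * z) \<le> \<bar>d\<bar>"
    using assms(2) by (simp add: norm_mult mult_left_le)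
  then have "cmod (exp (complex_of_real d * z) - 1) \<le> exp \<bar>d\<bar> * \<bar>d\<bar>"
    using norm_exp_minus_one_le[of "complex_of_real d * z"]
    by (meson exp_ge_zero exp_le_cancel_iff mult_mono norm_ge_zero order_trans)
  ultimately have "cmod (exp (complex_of_real \<alpha> * z) ^ k - exp z ^ m) \<le> exp (real m) * (exp \<bar>d\<bar> * \<bar>d\<bar>)"
    unfolding factor norm_mult by (intro mult_mono) auto
  then show ?thesis by (simp add: exp_add)
qed

lemma root_of_minus_one:
  assumes "k \<ge> 1"
  shows "\<exists>w::complex. cmod w = 1 \<and> w ^ k = -1"
proof (intro exI conjI)
  let ?w = "exp (\<i> * complex_of_real (pi / real k))"
  show "cmod ?w = 1" by simp
  have "?w ^ k = exp (of_nat k * (\<i> * complex_of_real (pi / real k)))" by (simp only: exp_of_nat_mult)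
  also have "of_nat k * (\<i> * complex_of_real (pi / real k)) = \<i> * pi" using assms by (simp add: field_simps)
  finally show "?w ^ k = -1" by simp
qed

lemma E_ge_binomial:
  assumes "\<alpha> \<notin> \<rat>" "\<bar>\<alpha>\<bar> \<le> 1" "1 \<le> k" "k \<le> n" "m \<le> n"
    and "real k * \<alpha> = real m + d" "d \<noteq> 0"
  shows "2 / (exp (real m + \<bar>d\<bar>) * \<bar>d\<bar>) \<le> E n \<alpha>"
proof -
  obtain w0 :: complex where w0: "cmod w0 = 1" "w0 ^ k = -1"
    using root_of_minus_one assms(3) by blast
  have "2 / (exp (real m + \<bar>d\<bar>) * \<bar>d\<bar>)
      = cmod (poly2 n (binomial_coeffs k m) 1 w0) / (exp (real m + \<bar>d\<bar>) * \<bar>d\<bar>)"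
    using assms by (simp add: poly2_binomial w0)
  also have "\<dots> \<le> E n \<alpha>"
    by (rule E_ge_quotient) (use assms w0 binomial_on_K in \<open>auto simp: poly2_binomial\<close>)
  finally show ?thesis .
qed

lemma nearest_nat:
  fixes x :: real
  assumes "0 < x"
  obtains m :: nat where "\<bar>x - real m\<bar> \<le> 1/2" "\<bar>x - real m\<bar> \<le> distZ x" "real m < x + 1"
proof
  have round_near: "\<bar>of_int (round x) - x\<bar> \<le> 1/2" by (rule of_int_round_abs_le)
  then have "real_of_int (round x) > -1" using assms by linarith
  then have m: "real (nat (round x)) = of_int (round x)" by simp
  show "\<bar>x - real (nat (round x))\<bar> \<le> 1/2" "real (nat (round x)) < x + 1"
    using round_near unfolding m by arith+
  show "\<bar>x - real (nat (round x))\<bar> \<le> distZ x"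
    unfolding m distZ_def
  proof (rule cInf_greatest)
    show "{\<bar>x - of_int m\<bar> |m. True} \<noteq> {}" by auto
    fix y assume "y \<in> {\<bar>x - of_int m\<bar> |m. True}"
    then obtain j where y: "y = \<bar>x - of_int j\<bar>" by blast
    show "\<bar>x - real_of_int (round x)\<bar> \<le> y"
    proof (cases "\<bar>x - of_int j\<bar> < 1/2")
      case True
      then show ?thesis using y round_unique'[OF True] by simp
    next
      case False
      then show ?thesis using y round_near by linarith
    qed
  qed
qed

text \<open>The estimate for a single multiple \<open>k\<alpha>\<close>: with \<open>m\<close> the integer nearest to \<open>k\<alpha>\<close> and
  \<open>d = k\<alpha> - m\<close> we have \<open>m + |d| \<le> n + 1\<close>, so \<open>E n \<alpha> \<ge> 2 / (e^(n+1) |d|)\<close>.\<close>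
lemma distZ_multiple_ge:
  assumes "0 < \<alpha>" "\<alpha> < 1" "\<alpha> \<notin> \<rat>" "1 \<le> k" "k \<le> n"
  shows "inverse (2 * exp (real n) * E n \<alpha>) \<le> distZ (real k * \<alpha>)"
proof -
  have k_alpha: "0 < real k * \<alpha>" "real k * \<alpha> < real k" using assms by auto
  obtain m :: nat where m: "\<bar>real k * \<alpha> - real m\<bar> \<le> 1/2"
      "\<bar>real k * \<alpha> - real m\<bar> \<le> distZ (real k * \<alpha>)" "real m < real k * \<alpha> + 1"
    using nearest_nat[OF k_alpha(1)] by blast
  define d where "d = real k * \<alpha> - real m"
  have "m \<le> k" using m(3) k_alpha(2) by linarith
  then have m_d_le: "real m + \<bar>d\<bar> \<le> real n + 1" using m(1) assms by (simp add: d_def)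
  have "d \<noteq> 0"
  proof
    assume "d = 0"
    then have "\<alpha> = real m / real k" using assms by (simp add: d_def field_simps)
    then show False using assms(3) by simp
  qed
  define M where "M = exp (real n + 1) * \<bar>d\<bar>"
  have "M > 0" using \<open>d \<noteq> 0\<close> by (simp add: M_def)
  have "2 / M \<le> 2 / (exp (real m + \<bar>d\<bar>) * \<bar>d\<bar>)"
    unfolding M_def using m_d_le \<open>d \<noteq> 0\<close> by (intro divide_left_mono mult_right_mono) auto
  also have "\<dots> \<le> E n \<alpha>"
    using assms \<open>m \<le> k\<close> \<open>d \<noteq> 0\<close> by (intro E_ge_binomial) (auto simp: d_def)
  finally have "2 / M \<le> E n \<alpha>" .
  then have "inverse (2 * exp (real n) * E n \<alpha>) \<le> inverse (2 * exp (real n) * (2 / M))"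
    using \<open>M > 0\<close> by (intro le_imp_inverse_le mult_left_mono) auto
  also have "\<dots> = exp 1 / 4 * \<bar>d\<bar>" using \<open>M > 0\<close> by (simp add: M_def exp_add field_simps)
  also have "\<dots> \<le> \<bar>d\<bar>" using mult_right_mono[of "exp 1" 4 "\<bar>d\<bar>"] exp_le by (simp add: mult.commute)
  also have "\<dots> \<le> distZ (real k * \<alpha>)" using m(2) by (simp add: d_def)
  finally show ?thesis .
qed

theorem corollary1:
  fixes \<alpha> :: real and n :: nat
  assumes "0 < \<alpha>" "\<alpha> < 1" "\<alpha> \<notin> \<rat>" "n \<ge> 1"
  shows "Min ((\<lambda>k. distZ (real k * \<alpha>)) ` {1..n}) \<ge> inverse (2 * exp (real n) * E n \<alpha>)"
  using distZ_multiple_ge[OF assms(1-3)] assms(4) by (subst Min_ge_iff) auto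

end
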